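(* Let $k\ge 0$ and $K=2k^3$. Let $\mathcal I$ be an interpretation coloured by $\kappa$ that is $K$-sparse, and let $\mathcal Q$ be a finite interpretation with $|\Delta^{\mathcal Q}|\le k$. Then $\mathcal Q$ maps homomorphically into $\mathcal I$ if and only if $\mathcal Q$ maps homomorphically into the quotient $\mathcal I/{\sim_K}$.
   Context: Homomorphisms are maps between domains preserving membership in every concept name and every role name. Distance: view $\mathcal I$ as an undirected graph with an edge between $x,y$ whenever $(x,y)$ or $(y,x)\in r^{\mathcal I}$ for some role name $r$; $d_{\mathcal I}(x,y)$ is the length of a shortest undirected path ($\infty$ if none). $N_k(x)=\{y: d_{\mathcal I}(x,y)\le k\}$, and $\mathcal I\upharpoonright N_k(x)$ is the induced subinterpretation (domain $N_k(x)$, concepts and roles restricted). A coloured interpretation is $\mathcal I$ with a partial map $\kappa\colon\mathrm{dom}(\kappa)\to C$, $\mathrm{dom}(\kappa)\subseteq\Delta^{\mathcal I}$, $C$ a set of colours; subinterpretations are coloured by the restriction of $\kappa$. A homomorphism $h$ from $\mathcal I$ (coloured by $\kappa$) to $\mathcal J$ (coloured by $\theta$) preserves colours if for all $x$: $x\in\mathrm{dom}(\kappa)\iff h(x)\in\mathrm{dom}(\theta)$, and then $\kappa(x)=\theta(h(x))$. $x\sim_k y$ iff $x=y$, or $x,y\in\mathrm{dom}(\kappa)$, $\kappa(x)=\kappa(y)$, and there are colour-preserving homomorphisms $\mathcal I\upharpoonright N_k(x)\to\mathcal I\upharpoonright N_k(y)$ mapping $x$ to $y$ and $\mathcal I\upharpoonright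 N_k(y)\to\mathcal I\upharpoonright N_k(x)$ mapping $y$ to $x$. $\mathcal I$ is $k$-sparse if for every $x$ and distinct $y,y'\in N_k(x)\cap\mathrm{dom}(\kappa)$ we have $\kappa(y)\ne\kappa(y')$. For an equivalence relation $\sim$ on $\Delta^{\mathcal I}$, the quotient $\mathcal I/{\sim}$ has domain the classes $[x]_\sim$, $A^{\mathcal I/\sim}=\{[x]_\sim: x\in A^{\mathcal I}\}$ and $r^{\mathcal I/\sim}=\{([x]_\sim,[y]_\sim):(x,y)\in r^{\mathcal I}\}$. *)

theory Defs
  imports Main
begin

record ('d, 'c, 'r) interp =
  dm :: "'d set"
  cn :: "'c \<Rightarrow> 'd set"
  rl :: "'r \<Rightarrow> ('d \<times> 'd) set"

definition wf_interp :: "('d, 'c, 'r) interp \<Rightarrow> bool" where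
  "wf_interp I \<longleftrightarrow> (\<forall>A. cn I A \<subseteq> dm I) \<and> (\<forall>r. rl I r \<subseteq> dm I \<times> dm I)"

definition is_hom :: "('d, 'c, 'r) interp \<Rightarrow> ('e, 'c, 'r) interp \<Rightarrow> ('d \<Rightarrow> 'e) \<Rightarrow> bool" where
  "is_hom I J h \<longleftrightarrow> h ` dm I \<subseteq> dm J
     \<and> (\<forall>A x. x \<in> cn I A \<longrightarrow> h x \<in> cn J A)
     \<and> (\<forall>r x y. (x, y) \<in> rl I r \<longrightarrow> (h x, h y) \<in> rl J r)"

definition gedge :: "('d, 'c, 'r) interp \<Rightarrow> ('d \<times> 'd) set" where
  "gedge I = {(x, y). \<exists>r. (x, y) \<in> rl I r \<or> (y, x) \<in> rl I r}"

definition nbhd :: "('d, 'c, 'r) interp \<Rightarrow> nat \<Rightarrow> 'd \<Rightarrow> 'd set" where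
  "nbhd I k x = {y \<in> dm I. \<exists>n\<le>k. (x, y) \<in> gedge I ^^ n}"

definition restr :: "('d, 'c, 'r) interp \<Rightarrow> 'd set \<Rightarrow> ('d, 'c, 'r) interp" where
  "restr I S = \<lparr> dm = dm I \<inter> S, cn = (\<lambda>A. cn I A \<inter> S), rl = (\<lambda>r. rl I r \<inter> (S \<times> S)) \<rparr>"

definition is_col_hom :: "('d, 'c, 'r) interp \<Rightarrow> ('d \<rightharpoonup> 'col) \<Rightarrow>
    ('e, 'c, 'r) interp \<Rightarrow> ('e \<rightharpoonup> 'col) \<Rightarrow> ('d \<Rightarrow> 'e) \<Rightarrow> bool" where
  "is_col_hom I \<kappa> J \<theta> h \<longleftrightarrow> is_hom I J h \<and>
     (\<forall>x \<in> dm I. (x \<in> dom \<kappa> \<longleftrightarrow> h x \<in> dom \<theta>) \<and> (x \<in> dom \<kappa> \<longrightarrow> \<kappa> x = \<theta> (h x)))"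

definition simk :: "('d, 'c, 'r) interp \<Rightarrow> ('d \<rightharpoonup> 'col) \<Rightarrow> nat \<Rightarrow> ('d \<times> 'd) set" where
  "simk I \<kappa> k = {(x, y). x \<in> dm I \<and> y \<in> dm I \<and>
     (x = y \<or>
      (x \<in> dom \<kappa> \<and> y \<in> dom \<kappa> \<and> \<kappa> x = \<kappa> y \<and>
       (\<exists>h. is_col_hom (restr I (nbhd I k x)) (\<kappa> |` nbhd I k x)
                        (restr I (nbhd I k y)) (\<kappa> |` nbhd I k y) h \<and> h x = y) \<and>
       (\<exists>g. is_col_hom (restr I (nbhd I k y)) (\<kappa> |` nbhd I k y)
                        (restr I (nbhd I k x)) (\<kappa> |` nbhd I k x) g \<and> g y = x)))}"

definition sparse :: "('d, 'c, 'r) interp \<Rightarrow> ('d \<rightharpoonup> 'col) \<Rightarrow> nat \<Rightarrow> bool" where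
  "sparse I \<kappa> k \<longleftrightarrow> (\<forall>x \<in> dm I. \<forall>y y'. y \<in> nbhd I k x \<inter> dom \<kappa> \<longrightarrow>
      y' \<in> nbhd I k x \<inter> dom \<kappa> \<longrightarrow> y \<noteq> y' \<longrightarrow> \<kappa> y \<noteq> \<kappa> y')"

definition quot :: "('d, 'c, 'r) interp \<Rightarrow> ('d \<times> 'd) set \<Rightarrow> ('d set, 'c, 'r) interp" where
  "quot I R = \<lparr> dm = dm I // R,
                cn = (\<lambda>A. {R `` {x} | x. x \<in> cn I A}),
                rl = (\<lambda>r. {(R `` {x}, R `` {y}) | x y. (x, y) \<in> rl I r}) \<rparr>"

end

theory Submission
  imports Defs
begin

(* For the converse, let g : Q -> I/~K and
   call phi a local map of radius m at b if it restricts to a colour-preserving homomorphism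
   from the m-ball around b into I. Members of one ~K-class have mutually homomorphic
   coloured K-balls, so a local map of radius m <= K at one member can be transported to
   any other member, and every edge of Q is realised by an edge of I between members of the
   two classes. Transporting along a shortest path from a root of each connected component
   of Q gives every node q a local map at a member of g q whose image lies near the root's
   representative; paths have length < |Q|, so the radius stays above |Q|.

   Uncoloured classes are singletons, so every connected set of uncoloured nodes of Q sits
   in I as an actual subgraph, which a single local map moves near the root. A coloured node
   is sent near the root to an element of its colour, and K-sparseness makes that element
   unique; this forces the images of the endpoints of every edge of Q to be compatible. *)

lemma rtrancl_imp_relpow_less_card:
  assumes "finite S" and "E \<subseteq> S \<times> S" and "x \<in> S" and "(x, y) \<in> E\<^sup>*"
  shows "\<exists>n < card S. (x, y) \<in> E ^^ n"
proof -
  obtain n where "(x, y) \<in> E ^^ n"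
    using rtrancl_imp_relpow[OF assms(4)] by blast
  then show ?thesis
  proof (induction n rule: less_induct)
    case (less n)
    show ?case
    proof (cases "n < card S")
      case True
      then show ?thesis using less.prems by blast
    next
      case False
      obtain f where f: "f 0 = x" "f n = y" "\<forall>i<n. (f i, f (Suc i)) \<in> E"
        using less.prems relpow_fun_conv by metis
      have "f (Suc i) \<in> S" if "i < n" for i
        using that f(3) assms(2) by blast
      then have "f i \<in> S" if "i \<le> n" for i
        using that assms(3) f(1) by (cases i) auto
      then have "f ` {..n} \<subseteq> S" by blast
      moreover have "card S < card {..n}" using False by simp
      ultimately have "\<not> inj_on f {..n}"
        using card_inj_on_le[OF _ _ assms(1)] by fastforce
      then obtain i j where ij: "i < j" "j \<le> n" "f i = f j"
        unfolding inj_on_def by (metis atMost_iff linorder_neqE_nat)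
      have "(x, f i) \<in> E ^^ i"
        using f ij by (auto simp: relpow_fun_conv intro!: exI[of _ f])
      moreover have "(f j, y) \<in> E ^^ (n - j)"
        using f ij by (auto simp: relpow_fun_conv intro!: exI[of _ "\<lambda>m. f (m + j)"])
      ultimately have "(x, y) \<in> E ^^ (i + (n - j))"
        using ij(3) by (auto simp: relpow_add)
      then show ?thesis
        using less.IH[of "i + (n - j)"] ij by simp
    qed
  qed
qed

lemma sym_rtrancl_Image_eq:
  assumes "sym r" and "(p, q) \<in> r\<^sup>*"
  shows "r\<^sup>* `` {p} = r\<^sup>* `` {q}"
proof -
  have "equiv UNIV (r\<^sup>*)"
    by (rule equivI) (auto simp: refl_rtrancl sym_rtrancl[OF assms(1)] trans_rtrancl)
  then show ?thesis
    using equiv_class_eq assms(2) by metis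
qed

lemma sym_gedge: "sym (gedge I)"
  unfolding gedge_def sym_def by blast

lemma gedge_subset: "wf_interp I \<Longrightarrow> gedge I \<subseteq> dm I \<times> dm I"
  unfolding gedge_def wf_interp_def by blast

lemma nbhd_dm: "y \<in> nbhd I m x \<Longrightarrow> y \<in> dm I"
  by (simp add: nbhd_def)

lemma nbhd_refl: "x \<in> dm I \<Longrightarrow> x \<in> nbhd I m x"
  unfolding nbhd_def by (auto intro: exI[of _ 0])

lemma nbhd_mono: "m \<le> m' \<Longrightarrow> nbhd I m x \<subseteq> nbhd I m' x"
  unfolding nbhd_def using le_trans by blast

lemma nbhd_trans: "y \<in> nbhd I m x \<Longrightarrow> z \<in> nbhd I m' y \<Longrightarrow> z \<in> nbhd I (m + m') x"
proof -
  assume "y \<in> nbhd I m x" "z \<in> nbhd I m' y"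
  then obtain n n' where "n \<le> m" "(x, y) \<in> gedge I ^^ n" "n' \<le> m'" "(y, z) \<in> gedge I ^^ n'"
    and "z \<in> dm I"
    unfolding nbhd_def by blast
  then have "(x, z) \<in> gedge I ^^ (n + n')" and "n + n' \<le> m + m'"
    by (auto simp: relpow_add)
  with \<open>z \<in> dm I\<close> show ?thesis
    unfolding nbhd_def by blast
qed

lemma gedge_in_nbhd: "wf_interp I \<Longrightarrow> (x, y) \<in> gedge I \<Longrightarrow> y \<in> nbhd I 1 x"
  unfolding nbhd_def using gedge_subset by fastforce

lemma rl_in_nbhd:
  assumes "wf_interp I" and "(x, y) \<in> rl I r"
  shows "y \<in> nbhd I 1 x" and "x \<in> nbhd I 1 y"
  using assms gedge_in_nbhd[OF assms(1)] unfolding gedge_def by blast+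

definition local_col_hom :: "('d, 'c, 'r) interp \<Rightarrow> ('d \<rightharpoonup> 'col) \<Rightarrow> nat \<Rightarrow> 'd \<Rightarrow> ('d \<Rightarrow> 'd) \<Rightarrow> bool" where
  "local_col_hom I \<kappa> m b \<phi> \<longleftrightarrow> (\<forall>y \<in> nbhd I m b. \<phi> y \<in> dm I \<and> \<kappa> (\<phi> y) = \<kappa> y \<and>
      (\<forall>A. y \<in> cn I A \<longrightarrow> \<phi> y \<in> cn I A) \<and>
      (\<forall>r z. z \<in> nbhd I m b \<longrightarrow> (y, z) \<in> rl I r \<longrightarrow> (\<phi> y, \<phi> z) \<in> rl I r))"

lemma local_col_homD:
  assumes "local_col_hom I \<kappa> m b \<phi>" and "y \<in> nbhd I m b"
  shows "\<phi> y \<in> dm I" and "\<kappa> (\<phi> y) = \<kappa> y" and "y \<in> cn I A \<Longrightarrow> \<phi> y \<in> cn I A"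
    and "z \<in> nbhd I m b \<Longrightarrow> (y, z) \<in> rl I r \<Longrightarrow> (\<phi> y, \<phi> z) \<in> rl I r"
  using assms unfolding local_col_hom_def by blast+

lemma local_col_hom_id: "local_col_hom I \<kappa> m b id"
  unfolding local_col_hom_def by (simp add: nbhd_dm)

lemma local_col_hom_subset:
  assumes "local_col_hom I \<kappa> m b \<phi>" and "nbhd I m' b' \<subseteq> nbhd I m b"
  shows "local_col_hom I \<kappa> m' b' \<phi>"
  unfolding local_col_hom_def
proof (intro ballI conjI allI impI)
  fix y assume "y \<in> nbhd I m' b'"
  then have y: "y \<in> nbhd I m b" using assms(2) by blast
  show "\<phi> y \<in> dm I" and "\<kappa> (\<phi> y) = \<kappa> y"
    using local_col_homD[OF assms(1) y] by simp_all
  fix A assume "y \<in> cn I A"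
  then show "\<phi> y \<in> cn I A"
    using local_col_homD(3)[OF assms(1) y] by simp
next
  fix y r z assume y: "y \<in> nbhd I m' b'" and z: "z \<in> nbhd I m' b'" and yz: "(y, z) \<in> rl I r"
  show "(\<phi> y, \<phi> z) \<in> rl I r"
    using local_col_homD(4)[OF assms(1) _ _ yz] y z assms(2) by blast
qed

lemma local_col_hom_mono:
  assumes "local_col_hom I \<kappa> m b \<phi>" and "b' \<in> nbhd I j b" and "j + m' \<le> m"
  shows "local_col_hom I \<kappa> m' b' \<phi>"
proof (rule local_col_hom_subset[OF assms(1)], rule subsetI)
  fix y assume "y \<in> nbhd I m' b'"
  then show "y \<in> nbhd I m b"
    by (rule subsetD[OF nbhd_mono[OF assms(3)] nbhd_trans[OF assms(2)]])
qed

lemma local_col_hom_relpow: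
  assumes "wf_interp I" and "local_col_hom I \<kappa> m b \<phi>"
    and "(b, y) \<in> gedge I ^^ n" and "n \<le> m"
  shows "(\<phi> b, \<phi> y) \<in> gedge I ^^ n"
  using assms(3,4)
proof (induction n arbitrary: y)
  case 0
  then show ?case by simp
next
  case (Suc n)
  then obtain z where bz: "(b, z) \<in> gedge I ^^ n" and zy: "(z, y) \<in> gedge I"
    by auto
  have "z \<in> dm I" and "y \<in> dm I"
    using zy gedge_subset[OF assms(1)] by auto
  with bz zy Suc.prems(2) have "z \<in> nbhd I m b" and "y \<in> nbhd I m b"
    unfolding nbhd_def by (auto intro: Suc_leD relpow_Suc_I)
  then have "(\<phi> z, \<phi> y) \<in> gedge I"
    using zy local_col_homD(4)[OF assms(2)] unfolding gedge_def by blast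
  moreover have "(\<phi> b, \<phi> z) \<in> gedge I ^^ n"
    using Suc.IH[OF bz] Suc.prems(2) by simp
  ultimately show ?case
    by (rule relpow_Suc_I[rotated])
qed

lemma local_col_hom_nbhd:
  assumes "wf_interp I" and "local_col_hom I \<kappa> m b \<phi>"
    and "y \<in> nbhd I j b" and "j \<le> m"
  shows "\<phi> y \<in> nbhd I j (\<phi> b)"
proof -
  obtain n where "n \<le> j" and "(b, y) \<in> gedge I ^^ n"
    using assms(3) unfolding nbhd_def by blast
  moreover have "\<phi> y \<in> dm I"
    using local_col_homD(1)[OF assms(2) subsetD[OF nbhd_mono[OF assms(4)] assms(3)]] .
  ultimately show ?thesis
    using local_col_hom_relpow[OF assms(1,2)] assms(4) unfolding nbhd_def by auto
qed

lemma local_col_hom_comp: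
  assumes "wf_interp I" and "local_col_hom I \<kappa> m' c \<psi>" and "local_col_hom I \<kappa> m a \<phi>"
    and "\<psi> c = a" and "m \<le> m'"
  shows "local_col_hom I \<kappa> m c (\<phi> \<circ> \<psi>)"
proof -
  have into: "\<psi> y \<in> nbhd I m a" if "y \<in> nbhd I m c" for y
    using local_col_hom_nbhd[OF assms(1,2) that assms(5)] assms(4) by simp
  have "local_col_hom I \<kappa> m c \<psi>"
    by (rule local_col_hom_subset[OF assms(2) nbhd_mono[OF assms(5)]])
  then show ?thesis
    using assms(3) into unfolding local_col_hom_def by simp
qed

lemma is_col_hom_local_col_hom:
  assumes "is_col_hom (restr I (nbhd I m x)) (\<kappa> |` nbhd I m x) (restr I (nbhd I m y)) (\<kappa> |` nbhd I m y) h"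
  shows "local_col_hom I \<kappa> m x h"
  unfolding local_col_hom_def
proof (intro ballI conjI allI impI)
  fix z assume z: "z \<in> nbhd I m x"
  then have zd: "z \<in> dm (restr I (nbhd I m x))"
    using nbhd_dm unfolding restr_def by fastforce
  then have hz: "h z \<in> dm I \<and> h z \<in> nbhd I m y"
    using assms unfolding is_col_hom_def is_hom_def restr_def by auto
  then show "h z \<in> dm I" by simp
  have "(z \<in> dom (\<kappa> |` nbhd I m x) \<longleftrightarrow> h z \<in> dom (\<kappa> |` nbhd I m y)) \<and>
      (z \<in> dom (\<kappa> |` nbhd I m x) \<longrightarrow> (\<kappa> |` nbhd I m x) z = (\<kappa> |` nbhd I m y) (h z))"
    using assms zd unfolding is_col_hom_def by blast
  then show "\<kappa> (h z) = \<kappa> z"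
    using z hz by (auto simp: restrict_map_def split: if_splits)
  fix A assume "z \<in> cn I A"
  then have "z \<in> cn (restr I (nbhd I m x)) A"
    using z unfolding restr_def by simp
  then show "h z \<in> cn I A"
    using assms unfolding is_col_hom_def is_hom_def restr_def by auto
next
  fix z r w assume "z \<in> nbhd I m x" "w \<in> nbhd I m x" "(z, w) \<in> rl I r"
  then have "(z, w) \<in> rl (restr I (nbhd I m x)) r"
    unfolding restr_def by simp
  then show "(h z, h w) \<in> rl I r"
    using assms unfolding is_col_hom_def is_hom_def restr_def by auto
qed

lemma simk_sym: "(x, y) \<in> simk I \<kappa> K \<Longrightarrow> (y, x) \<in> simk I \<kappa> K"
  unfolding simk_def by auto

lemma simk_refl: "x \<in> dm I \<Longrightarrow> (x, x) \<in> simk I \<kappa> K"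
  unfolding simk_def by blast

lemma simk_dm: "(x, y) \<in> simk I \<kappa> K \<Longrightarrow> x \<in> dm I \<and> y \<in> dm I"
  unfolding simk_def by blast

lemma simk_colour: "(x, y) \<in> simk I \<kappa> K \<Longrightarrow> \<kappa> x = \<kappa> y"
  unfolding simk_def by blast

lemma simk_uncoloured: "(x, y) \<in> simk I \<kappa> K \<Longrightarrow> \<kappa> x = None \<Longrightarrow> x = y"
  unfolding simk_def by blast

lemma simk_pullback:
  assumes "wf_interp I" and "(a, b) \<in> simk I \<kappa> K" and "local_col_hom I \<kappa> m b \<phi>" and "m \<le> K"
  shows "\<exists>\<psi>. local_col_hom I \<kappa> m a \<psi> \<and> \<psi> a = \<phi> b"
proof (cases "a = b")
  case True
  then show ?thesis using assms(3) by blast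
next
  case False
  then obtain h where "is_col_hom (restr I (nbhd I K a)) (\<kappa> |` nbhd I K a)
      (restr I (nbhd I K b)) (\<kappa> |` nbhd I K b) h" and "h a = b"
    using assms(2) unfolding simk_def by blast
  then have "local_col_hom I \<kappa> m a (\<phi> \<circ> h)"
    using local_col_hom_comp[OF assms(1) is_col_hom_local_col_hom assms(3)] assms(4) by blast
  with \<open>h a = b\<close> show ?thesis by auto
qed

lemma simk_transfer:
  assumes "wf_interp I" and "(a, b) \<in> simk I \<kappa> K" and "(a, b') \<in> simk I \<kappa> K"
    and "local_col_hom I \<kappa> m b \<phi>" and "m \<le> K"
  shows "\<exists>\<psi>. local_col_hom I \<kappa> m b' \<psi> \<and> \<psi> b' = \<phi> b"
  using simk_pullback[OF assms(1) assms(2,4,5)] simk_pullback[OF assms(1) simk_sym[OF assms(3)] _ assms(5)]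
  by metis

lemma sparse_colour_inj:
  assumes "sparse I \<kappa> K" and "x \<in> dm I" and "y \<in> nbhd I K x" and "y' \<in> nbhd I K x"
    and "\<kappa> y = \<kappa> y'" and "\<kappa> y \<noteq> None"
  shows "y = y'"
  using assms unfolding sparse_def by (metis IntI domIff)

lemma is_hom_quot:
  assumes "is_hom Q I h"
  shows "is_hom Q (quot I R) (\<lambda>q. R `` {h q})"
  using assms unfolding is_hom_def quot_def by (fastforce intro: quotientI)

locale quot_lifting =
  fixes I :: "('d, 'c, 'r) interp" and \<kappa> :: "'d \<rightharpoonup> 'col" and K :: nat
    and Q :: "('q, 'c, 'r) interp" and g :: "'q \<Rightarrow> 'd set" and B :: nat
  assumes wf_I: "wf_interp I" and sparse: "sparse I \<kappa> K"
    and wf_Q: "wf_interp Q" and finite_Q: "finite (dm Q)" and card_Q: "card (dm Q) \<le> Suc B"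
    and radius: "2 * B + 1 \<le> K"
    and hom: "is_hom Q (quot I (simk I \<kappa> K)) g"
begin

abbreviation sim :: "('d \<times> 'd) set" where
  "sim \<equiv> simk I \<kappa> K"

lemma class_of:
  assumes "q \<in> dm Q"
  obtains a where "a \<in> dm I" and "g q = sim `` {a}"
  using hom assms unfolding is_hom_def quot_def quotient_def by auto

lemma in_own_class: "x \<in> dm I \<Longrightarrow> x \<in> sim `` {x}"
  using simk_refl by simp

definition rep :: "'q \<Rightarrow> 'd" where
  "rep q = (SOME b. b \<in> g q)"

lemma rep_in_class:
  assumes "q \<in> dm Q"
  shows "rep q \<in> g q"
proof -
  obtain a where "a \<in> dm I" and "g q = sim `` {a}"
    using class_of[OF assms] .
  then have "a \<in> g q"
    using in_own_class by simp
  then show ?thesis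
    unfolding rep_def by (rule someI)
qed

lemma class_dm:
  assumes "q \<in> dm Q" and "b \<in> g q"
  shows "b \<in> dm I"
proof -
  obtain a where "g q = sim `` {a}"
    using class_of[OF assms(1)] by blast
  then have "(a, b) \<in> sim"
    using assms(2) by simp
  then show ?thesis
    using simk_dm by fast
qed

lemma class_colour:
  assumes "q \<in> dm Q" and "b \<in> g q"
  shows "\<kappa> b = \<kappa> (rep q)"
proof -
  obtain a where "g q = sim `` {a}"
    using class_of[OF assms(1)] by blast
  then have "(a, b) \<in> sim" and "(a, rep q) \<in> sim"
    using assms(2) rep_in_class[OF assms(1)] by simp_all
  then show ?thesis
    using simk_colour by (metis (no_types))
qed

lemma uncoloured_class:
  assumes "q \<in> dm Q" and "b \<in> g q" and "\<kappa> (rep q) = None"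
  shows "b = rep q"
proof -
  obtain a where "g q = sim `` {a}"
    using class_of[OF assms(1)] by blast
  then have "(a, b) \<in> sim" and "(a, rep q) \<in> sim"
    using assms(2) rep_in_class[OF assms(1)] by simp_all
  moreover from this have "\<kappa> a = None"
    using assms(3) simk_colour by (metis (no_types))
  ultimately show ?thesis
    using simk_uncoloured by (metis (no_types))
qed

lemma class_transfer:
  assumes "q \<in> dm Q" and "b \<in> g q" and "b' \<in> g q"
    and "local_col_hom I \<kappa> m b \<phi>" and "m \<le> K"
  shows "\<exists>\<psi>. local_col_hom I \<kappa> m b' \<psi> \<and> \<psi> b' = \<phi> b"
proof -
  obtain a where "g q = sim `` {a}"
    using class_of[OF assms(1)] by blast
  then have "(a, b) \<in> sim" and "(a, b') \<in> sim"
    using assms(2,3) by simp_all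
  then show ?thesis
    by (rule simk_transfer[OF wf_I _ _ assms(4,5)])
qed

lemma rl_witness:
  assumes "(p, q) \<in> rl Q r"
  shows "\<exists>c \<in> g p. \<exists>d \<in> g q. (c, d) \<in> rl I r"
proof -
  have "(g p, g q) \<in> rl (quot I sim) r"
    using hom assms unfolding is_hom_def by blast
  then obtain c d where "(c, d) \<in> rl I r" and "g p = sim `` {c}" and "g q = sim `` {d}"
    unfolding quot_def by auto
  moreover have "c \<in> dm I" and "d \<in> dm I"
    using wf_I \<open>(c, d) \<in> rl I r\<close> unfolding wf_interp_def by blast+
  ultimately show ?thesis
    using in_own_class[OF \<open>c \<in> dm I\<close>] in_own_class[OF \<open>d \<in> dm I\<close>] by blast
qed

lemma cn_witness:
  assumes "q \<in> cn Q A"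
  shows "\<exists>w \<in> g q. w \<in> cn I A"
proof -
  have "g q \<in> cn (quot I sim) A"
    using hom assms unfolding is_hom_def by blast
  then obtain w where "w \<in> cn I A" and "g q = sim `` {w}"
    unfolding quot_def by auto
  moreover have "w \<in> dm I"
    using wf_I \<open>w \<in> cn I A\<close> unfolding wf_interp_def by blast
  ultimately show ?thesis
    using in_own_class[OF \<open>w \<in> dm I\<close>] by blast
qed

lemma gedge_witness:
  assumes "(p, q) \<in> gedge Q"
  shows "\<exists>c \<in> g p. \<exists>d \<in> g q. d \<in> nbhd I 1 c"
  using assms rl_witness rl_in_nbhd[OF wf_I] unfolding gedge_def by blast

lemma local_col_hom_along_path:
  assumes "(q0, q) \<in> gedge Q ^^ n" and "q0 \<in> dm Q" and "n \<le> K"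
  shows "\<exists>\<phi>. local_col_hom I \<kappa> (K - n) (rep q) \<phi> \<and> \<phi> (rep q) \<in> nbhd I n (rep q0)"
  using assms(1,3)
proof (induction n arbitrary: q)
  case 0
  then show ?case
    using local_col_hom_id nbhd_refl class_dm[OF assms(2) rep_in_class[OF assms(2)]] by fastforce
next
  case (Suc n)
  then obtain p where path: "(q0, p) \<in> gedge Q ^^ n" and pq: "(p, q) \<in> gedge Q"
    by auto
  have p: "p \<in> dm Q" and q: "q \<in> dm Q"
    using pq gedge_subset[OF wf_Q] by auto
  obtain \<psi> where \<psi>: "local_col_hom I \<kappa> (K - n) (rep p) \<psi>" "\<psi> (rep p) \<in> nbhd I n (rep q0)"
    using Suc.IH[OF path] Suc.prems(2) by auto
  obtain c d where c: "c \<in> g p" and d: "d \<in> g q" and cd: "d \<in> nbhd I 1 c"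
    using gedge_witness[OF pq] by blast
  obtain \<psi>' where \<psi>': "local_col_hom I \<kappa> (K - n) c \<psi>'" "\<psi>' c = \<psi> (rep p)"
    using class_transfer[OF p rep_in_class[OF p] c \<psi>(1)] by auto
  have "\<psi>' d \<in> nbhd I 1 (\<psi>' c)"
    using local_col_hom_nbhd[OF wf_I \<psi>'(1) cd] Suc.prems(2) by simp
  then have near: "\<psi>' d \<in> nbhd I (Suc n) (rep q0)"
    using nbhd_trans \<psi>(2) \<psi>'(2) by fastforce
  have "local_col_hom I \<kappa> (K - Suc n) d \<psi>'"
    using local_col_hom_mono[OF \<psi>'(1) cd] Suc.prems(2) by simp
  then obtain \<phi> where "local_col_hom I \<kappa> (K - Suc n) (rep q) \<phi>" "\<phi> (rep q) = \<psi>' d"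
    using class_transfer[OF q d rep_in_class[OF q]] by (meson diff_le_self)
  with near show ?case by auto
qed

definition root :: "'q \<Rightarrow> 'q" where
  "root q = (SOME p. p \<in> (gedge Q)\<^sup>* `` {q})"

lemma root_reachable:
  assumes "q \<in> dm Q"
  shows "root q \<in> dm Q" and "(root q, q) \<in> (gedge Q)\<^sup>*"
proof -
  have "q \<in> (gedge Q)\<^sup>* `` {q}"
    by simp
  then have "root q \<in> (gedge Q)\<^sup>* `` {q}"
    unfolding root_def by (rule someI)
  then have "(q, root q) \<in> (gedge Q)\<^sup>*"
    by simp
  then show "(root q, q) \<in> (gedge Q)\<^sup>*"
    by (rule symD[OF sym_rtrancl[OF sym_gedge]])
  from \<open>(q, root q) \<in> (gedge Q)\<^sup>*\<close> show "root q \<in> dm Q"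
  proof (cases rule: rtranclE)
    case base
    then show ?thesis using assms by simp
  next
    case (step y)
    then show ?thesis using gedge_subset[OF wf_Q] by blast
  qed
qed

lemma root_eq:
  assumes "(p, q) \<in> (gedge Q)\<^sup>*"
  shows "root p = root q"
  unfolding root_def using sym_rtrancl_Image_eq[OF sym_gedge assms] by simp

lemma path_length_le:
  assumes "E \<subseteq> gedge Q" and "p \<in> dm Q" and "(p, q) \<in> E\<^sup>*"
  shows "\<exists>n \<le> B. (p, q) \<in> E ^^ n"
proof -
  have "E \<subseteq> dm Q \<times> dm Q"
    using assms(1) gedge_subset[OF wf_Q] by blast
  then obtain n where "n < card (dm Q)" and "(p, q) \<in> E ^^ n"
    using rtrancl_imp_relpow_less_card[OF finite_Q _ assms(2,3)] by blast
  then show ?thesis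
    using card_Q by (intro exI[of _ n]) simp
qed

lemma near_root:
  assumes "q \<in> dm Q"
  shows "\<exists>n \<le> B. \<exists>\<phi>. local_col_hom I \<kappa> (K - n) (rep q) \<phi> \<and> \<phi> (rep q) \<in> nbhd I n (rep (root q))"
proof -
  obtain n where "n \<le> B" and "(root q, q) \<in> gedge Q ^^ n"
    using path_length_le[OF subset_refl root_reachable[OF assms]] by blast
  moreover have "n \<le> K"
    using \<open>n \<le> B\<close> radius by simp
  ultimately show ?thesis
    using local_col_hom_along_path[OF _ root_reachable(1)[OF assms]] by blast
qed

definition uncoloured_edge :: "('q \<times> 'q) set" where
  "uncoloured_edge = {(p, q) \<in> gedge Q. \<kappa> (rep p) = None \<and> \<kappa> (rep q) = None}"

lemma uncoloured_edge_subset: "uncoloured_edge \<subseteq> gedge Q"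
  unfolding uncoloured_edge_def by auto

lemma sym_uncoloured_edge: "sym uncoloured_edge"
  unfolding uncoloured_edge_def sym_def by (auto intro: symD[OF sym_gedge])

lemma uncoloured_edge_relpow_nbhd:
  assumes "(q, x) \<in> uncoloured_edge ^^ j" and "q \<in> dm Q"
  shows "rep x \<in> nbhd I j (rep q)"
  using assms(1)
proof (induction j arbitrary: x)
  case 0
  then show ?case
    using nbhd_refl class_dm[OF assms(2) rep_in_class[OF assms(2)]] by simp
next
  case (Suc j)
  then obtain p where qp: "(q, p) \<in> uncoloured_edge ^^ j" and px: "(p, x) \<in> uncoloured_edge"
    by auto
  have px': "(p, x) \<in> gedge Q"
    using px uncoloured_edge_subset by blast
  then have p: "p \<in> dm Q" and x: "x \<in> dm Q"
    using gedge_subset[OF wf_Q] by auto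
  obtain c d where c: "c \<in> g p" and d: "d \<in> g x" and cd: "d \<in> nbhd I 1 c"
    using gedge_witness[OF px'] by blast
  have "\<kappa> (rep p) = None" and "\<kappa> (rep x) = None"
    using px unfolding uncoloured_edge_def by simp_all
  then have "c = rep p" and "d = rep x"
    using uncoloured_class[OF p c] uncoloured_class[OF x d] by simp_all
  then have px_near: "rep x \<in> nbhd I 1 (rep p)"
    using cd by simp
  show ?case
    using nbhd_trans[OF Suc.IH[OF qp] px_near] by simp
qed

(* One local map serves a whole uncoloured component, so edges inside it are preserved. *)
definition chart :: "'q \<Rightarrow> 'd \<Rightarrow> 'd" where
  "chart q = (SOME \<phi>. \<forall>x \<in> uncoloured_edge\<^sup>* `` {q}.
     local_col_hom I \<kappa> 1 (rep x) \<phi> \<and> \<phi> (rep x) \<in> nbhd I (K - 1) (rep (root q)))"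

lemma chart_spec:
  assumes "q \<in> dm Q" and "(q, x) \<in> uncoloured_edge\<^sup>*"
  shows "local_col_hom I \<kappa> 1 (rep x) (chart q)" and "chart q (rep x) \<in> nbhd I (K - 1) (rep (root q))"
proof -
  obtain n \<phi> where n: "n \<le> B" and \<phi>: "local_col_hom I \<kappa> (K - n) (rep q) \<phi>"
    and near: "\<phi> (rep q) \<in> nbhd I n (rep (root q))"
    using near_root[OF assms(1)] by blast
  have "local_col_hom I \<kappa> 1 (rep x) \<phi> \<and> \<phi> (rep x) \<in> nbhd I (K - 1) (rep (root q))"
    if "x \<in> uncoloured_edge\<^sup>* `` {q}" for x
  proof -
    have "(q, x) \<in> uncoloured_edge\<^sup>*"
      using that by simp
    then obtain j where j: "j \<le> B" and "(q, x) \<in> uncoloured_edge ^^ j"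
      using path_length_le[OF uncoloured_edge_subset assms(1)] by blast
    then have x: "rep x \<in> nbhd I j (rep q)"
      using uncoloured_edge_relpow_nbhd assms(1) by simp
    have "n + j \<le> K - 1"
      using j n radius by simp
    have "\<phi> (rep x) \<in> nbhd I j (\<phi> (rep q))"
      using local_col_hom_nbhd[OF wf_I \<phi> x] j n radius by simp
    then have "\<phi> (rep x) \<in> nbhd I (n + j) (rep (root q))"
      by (rule nbhd_trans[OF near])
    then have "\<phi> (rep x) \<in> nbhd I (K - 1) (rep (root q))"
      by (rule subsetD[OF nbhd_mono[OF \<open>n + j \<le> K - 1\<close>]])
    moreover have "local_col_hom I \<kappa> 1 (rep x) \<phi>"
      using local_col_hom_mono[OF \<phi> x] j n radius by simp
    ultimately show ?thesis
      by simp
  qed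
  then have "\<exists>\<phi>. \<forall>x \<in> uncoloured_edge\<^sup>* `` {q}. local_col_hom I \<kappa> 1 (rep x) \<phi> \<and>
      \<phi> (rep x) \<in> nbhd I (K - 1) (rep (root q))"
    by blast
  then have "\<forall>x \<in> uncoloured_edge\<^sup>* `` {q}. local_col_hom I \<kappa> 1 (rep x) (chart q) \<and>
      chart q (rep x) \<in> nbhd I (K - 1) (rep (root q))"
    unfolding chart_def by (rule someI_ex)
  moreover have "x \<in> uncoloured_edge\<^sup>* `` {q}"
    using assms(2) by simp
  ultimately show "local_col_hom I \<kappa> 1 (rep x) (chart q)"
    and "chart q (rep x) \<in> nbhd I (K - 1) (rep (root q))"
    by simp_all
qed

lemma chart_eq:
  assumes "(p, q) \<in> uncoloured_edge"
  shows "chart p = chart q"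
proof -
  have "uncoloured_edge\<^sup>* `` {p} = uncoloured_edge\<^sup>* `` {q}"
    using sym_rtrancl_Image_eq[OF sym_uncoloured_edge r_into_rtrancl[OF assms]] .
  moreover have "(p, q) \<in> gedge Q"
    using assms uncoloured_edge_subset by blast
  then have "root p = root q"
    by (rule root_eq[OF r_into_rtrancl])
  ultimately show ?thesis
    unfolding chart_def by simp
qed

definition lift :: "'q \<Rightarrow> 'd" where
  "lift q = chart q (rep q)"

lemma lift_transfer:
  assumes "q \<in> dm Q" and "b \<in> g q"
  shows "\<exists>\<psi>. local_col_hom I \<kappa> 1 b \<psi> \<and> \<psi> b = lift q"
  using class_transfer[OF assms(1) rep_in_class[OF assms(1)] assms(2) chart_spec(1)[OF assms(1) rtrancl_refl]]
    radius unfolding lift_def by simp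

lemma lift_near_root: "q \<in> dm Q \<Longrightarrow> lift q \<in> nbhd I (K - 1) (rep (root q))"
  unfolding lift_def by (rule chart_spec(2)[OF _ rtrancl_refl])

lemma lift_colour:
  assumes "q \<in> dm Q"
  shows "\<kappa> (lift q) = \<kappa> (rep q)"
  unfolding lift_def
  using local_col_homD(2)[OF chart_spec(1)[OF assms rtrancl_refl] nbhd_refl[OF class_dm[OF assms rep_in_class[OF assms]]]] .

lemma coloured_lift_unique:
  assumes "q \<in> dm Q" and "\<kappa> (rep q) \<noteq> None"
    and "y \<in> nbhd I K (rep (root q))" and "\<kappa> y = \<kappa> (rep q)"
  shows "y = lift q"
proof (rule sparse_colour_inj[OF sparse _ assms(3)])
  show "rep (root q) \<in> dm I"
    using class_dm[OF root_reachable(1) rep_in_class[OF root_reachable(1)], OF assms(1) assms(1)] .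
  show "lift q \<in> nbhd I K (rep (root q))"
    using subsetD[OF nbhd_mono lift_near_root[OF assms(1)]] by simp
  show "\<kappa> y = \<kappa> (lift q)" and "\<kappa> y \<noteq> None"
    using assms(2,4) lift_colour[OF assms(1)] by simp_all
qed

lemma lift_edge_to_coloured:
  assumes "p \<in> dm Q" and "q \<in> dm Q" and "root p = root q" and "\<kappa> (rep q) \<noteq> None"
    and "c \<in> g p" and "d \<in> g q" and "d \<in> nbhd I 1 c"
  shows "\<exists>\<psi>. local_col_hom I \<kappa> 1 c \<psi> \<and> \<psi> c = lift p \<and> \<psi> d = lift q"
proof -
  obtain \<psi> where \<psi>: "local_col_hom I \<kappa> 1 c \<psi>" and "\<psi> c = lift p"
    using lift_transfer[OF assms(1,5)] by blast
  then have "\<psi> d \<in> nbhd I 1 (lift p)"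
    using local_col_hom_nbhd[OF wf_I \<psi> assms(7)] by simp
  from nbhd_trans[OF lift_near_root[OF assms(1)] this]
  have "\<psi> d \<in> nbhd I (K - 1 + 1) (rep (root q))"
    using assms(3) by simp
  moreover have "\<kappa> (\<psi> d) = \<kappa> (rep q)"
    using local_col_homD(2)[OF \<psi> assms(7)] class_colour[OF assms(2,6)] by simp
  ultimately have "\<psi> d = lift q"
    using coloured_lift_unique[OF assms(2,4)] radius by simp
  with \<psi> \<open>\<psi> c = lift p\<close> show ?thesis by blast
qed

lemma lift_rl:
  assumes "(p, q) \<in> rl Q r"
  shows "(lift p, lift q) \<in> rl I r"
proof -
  have p: "p \<in> dm Q" and q: "q \<in> dm Q"
    using wf_Q assms unfolding wf_interp_def by blast+
  have pq: "(p, q) \<in> gedge Q"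
    using assms unfolding gedge_def by blast
  then have root: "root p = root q"
    by (rule root_eq[OF r_into_rtrancl])
  obtain c d where c: "c \<in> g p" and d: "d \<in> g q" and cd: "(c, d) \<in> rl I r"
    using rl_witness[OF assms] by blast
  note near = rl_in_nbhd[OF wf_I cd]
  have c1: "c \<in> nbhd I 1 c" and d1: "d \<in> nbhd I 1 d"
    using nbhd_refl[OF class_dm[OF p c]] nbhd_refl[OF class_dm[OF q d]] by simp_all
  consider (uncoloured) "\<kappa> (rep p) = None" and "\<kappa> (rep q) = None"
    | (q_coloured) "\<kappa> (rep q) \<noteq> None"
    | (p_coloured) "\<kappa> (rep p) \<noteq> None"
    by blast
  then show ?thesis
  proof cases
    case uncoloured
    then have "c = rep p" and "d = rep q"
      using uncoloured_class[OF p c] uncoloured_class[OF q d] by simp_all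
    have "(p, q) \<in> uncoloured_edge"
      using pq uncoloured unfolding uncoloured_edge_def by simp
    then have lifts: "lift p = chart p c" "lift q = chart p d"
      unfolding lift_def using chart_eq \<open>c = rep p\<close> \<open>d = rep q\<close> by simp_all
    have "local_col_hom I \<kappa> 1 c (chart p)"
      using chart_spec(1)[OF p rtrancl_refl] \<open>c = rep p\<close> by simp
    from local_col_homD(4)[OF this c1 near(1) cd] show ?thesis
      unfolding lifts .
  next
    case q_coloured
    then obtain \<psi> where \<psi>: "local_col_hom I \<kappa> 1 c \<psi>" and "\<psi> c = lift p" and "\<psi> d = lift q"
      using lift_edge_to_coloured[OF p q root _ c d near(1)] by blast
    then show ?thesis
      using local_col_homD(4)[OF \<psi> c1 near(1) cd] by simp
  next
    case p_coloured
    then obtain \<psi> where \<psi>: "local_col_hom I \<kappa> 1 d \<psi>" and "\<psi> d = lift q" and "\<psi> c = lift p"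
      using lift_edge_to_coloured[OF q p root[symmetric] _ d c near(2)] by blast
    then show ?thesis
      using local_col_homD(4)[OF \<psi> near(2) d1 cd] by simp
  qed
qed

lemma lift_cn:
  assumes "q \<in> cn Q A"
  shows "lift q \<in> cn I A"
proof -
  have q: "q \<in> dm Q"
    using wf_Q assms unfolding wf_interp_def by blast
  obtain w where w: "w \<in> g q" and wA: "w \<in> cn I A"
    using cn_witness[OF assms] by blast
  obtain \<psi> where \<psi>: "local_col_hom I \<kappa> 1 w \<psi>" and "\<psi> w = lift q"
    using lift_transfer[OF q w] by blast
  then show ?thesis
    using local_col_homD(3)[OF \<psi> nbhd_refl[OF class_dm[OF q w]] wA] by simp
qed

theorem is_hom_lift: "is_hom Q I lift"
proof -
  have "lift q \<in> dm I" if "q \<in> dm Q" for q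
    using nbhd_dm[OF lift_near_root[OF that]] .
  then show ?thesis
    unfolding is_hom_def using lift_cn lift_rl by blast
qed

end

theorem theorem6:
  fixes k :: nat and K :: nat
    and I :: "('d, 'c, 'r) interp" and \<kappa> :: "'d \<rightharpoonup> 'col"
    and Q :: "('q, 'c, 'r) interp"
  assumes "K = 2 * k ^ 3"
    and "wf_interp I" and "dom \<kappa> \<subseteq> dm I"
    and "sparse I \<kappa> K"
    and "wf_interp Q" and "finite (dm Q)" and "card (dm Q) \<le> k"
  shows "(\<exists>h. is_hom Q I h) \<longleftrightarrow> (\<exists>h. is_hom Q (quot I (simk I \<kappa> K)) h)"
proof
  assume "\<exists>h. is_hom Q I h"
  then show "\<exists>h. is_hom Q (quot I (simk I \<kappa> K)) h"
    using is_hom_quot by blast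
next
  assume "\<exists>h. is_hom Q (quot I (simk I \<kappa> K)) h"
  then obtain g where g: "is_hom Q (quot I (simk I \<kappa> K)) g" ..
  show "\<exists>h. is_hom Q I h"
  proof (cases "dm Q = {}")
    case True
    then have "is_hom Q I (\<lambda>_. undefined)"
      using assms(5) unfolding is_hom_def wf_interp_def by blast
    then show ?thesis by blast
  next
    case False
    then have "1 \<le> k"
      using assms(6,7) card_gt_0_iff[of "dm Q"] by linarith
    then have "2 * (k - 1) + 1 \<le> K"
      using self_le_power[of k 3] assms(1) by simp
    then interpret quot_lifting I \<kappa> K Q g "k - 1"
      using assms(2,4-7) g \<open>1 \<le> k\<close> by unfold_locales simp_all
    show ?thesis
      using is_hom_lift by blast
  qed
qed

end
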